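(* Assume $y_1(t)\to0$ as $t\to\infty$. Then the following are equivalent: (S) $\int_0^t\cos(\omega s)A(s)y_1(s)\,ds=o(A(t))$ and $\int_0^t\sin(\omega s)A(s)y_1(s)\,ds=o(A(t))$ as $t\to\infty$; (T) $\int_0^t\cos(\omega s)A(s)f(s)\,ds=o(A(t))$ and $\int_0^t\sin(\omega s)A(s)f(s)\,ds=o(A(t))$ as $t\to\infty$.
   Context: Standing assumptions: $\omega>0$ is a constant; $p\in C^1([0,\infty))$ with $p(t)>0$ and $p'(t)<0$ for all $t\ge0$, $\int_0^\infty p(t)\,dt=\infty$ and $\int_0^\infty p(t)^2\,dt<\infty$; $f\in L^1_{\mathrm{loc}}([0,\infty))$. Notation: $A(t)=\exp(\frac12\int_0^tp(s)\,ds)$ (so $A(t)\to\infty$); $y_1(t)=\int_0^te^{-\omega^2(t-s)}f(s)\,ds$, the solution of $y_1'=-\omega^2y_1+f$, $y_1(0)=0$. *)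

theory Defs
  imports "HOL-Analysis.Analysis" "HOL-Library.Landau_Symbols"
begin

definition Afun :: "(real \<Rightarrow> real) \<Rightarrow> real \<Rightarrow> real" where
  "Afun p t = exp (integral {0..t} p / 2)"

definition y1fun :: "real \<Rightarrow> (real \<Rightarrow> real) \<Rightarrow> real \<Rightarrow> real" where
  "y1fun \<omega> f t = integral {0..t} (\<lambda>s. exp (- (\<omega>\<^sup>2) * (t - s)) * f s)"

end

theory Submission
  imports Defs
begin

(* Write y = y1, so that y' = f - \<omega>^2 y in the integrated sense, and A' = p A / 2.
   Integrating f against cos(\<omega> s) A(s) and sin(\<omega> s) A(s) by parts turns the
   f-integrals Tc, Ts into the y-integrals C, S:
     Tc = \<omega>^2 C + \<omega> S + o(A),   Ts = \<omega>^2 S - \<omega> C + o(A).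
   The remainders are the boundary terms cos(\<omega> t) A(t) y(t), sin(\<omega> t) A(t) y(t) and the
   integrals of (p A / 2) cos(\<omega> s) y(s), (p A / 2) sin(\<omega> s) y(s); they are o(A) because
   y tends to 0 and A, the primitive of p A / 2, tends to infinity.  The matrix of the
   linear part is invertible, so (C, S) = o(A) if and only if (Tc, Ts) = o(A).
   Since f is merely locally integrable, the integration by parts rests on Fubini's
   theorem over a triangle. *)

lemma sigma_finite_lebesgue: "sigma_finite_measure (lebesgue :: real measure)"
  unfolding sigma_finite_measure_def
proof (intro exI[of _ "range (\<lambda>n::nat. {-real n..real n})"] conjI)
  show "\<Union> (range (\<lambda>n::nat. {-real n..real n})) = space lebesgue"
    by (auto, metis abs_le_iff real_arch_simple minus_le_iff)
qed auto

(* Locally integrable functions need not be Borel measurable, so Fubini's theorem is used for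
   the product of two copies of lebesgue rather than for lborel. *)
interpretation lebesgue_pair: pair_sigma_finite "lebesgue :: real measure" "lebesgue :: real measure"
  by (simp add: pair_sigma_finite.intro sigma_finite_lebesgue)

lemma integrable_triangle_kernel:
  fixes g h :: "real \<Rightarrow> real"
  assumes h: "h absolutely_integrable_on {a..b}" and g: "continuous_on {a..b} g"
  shows "integrable (lebesgue \<Otimes>\<^sub>M lebesgue)
    (\<lambda>(u, s). if s \<le> u then indicator {a..b} u * g u * (indicator {a..b} s * h s) else 0)"
proof -
  define gb where "gb u = indicator {a..b} u * g u" for u
  define hb where "hb s = indicator {a..b} s * h s" for s
  have hb_int: "integrable lebesgue hb"
    using h unfolding set_integrable_def hb_def by simp
  have [measurable]: "hb \<in> borel_measurable lebesgue"
    using hb_int by (rule borel_measurable_integrable)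
  have [measurable]: "gb \<in> borel_measurable lebesgue"
    using borel_measurable_continuous_on_indicator[OF _ g] unfolding gb_def
    by (simp add: measurable_completion)
  have [measurable]: "fst \<in> borel_measurable (lebesgue \<Otimes>\<^sub>M lebesgue)"
    "snd \<in> borel_measurable (lebesgue \<Otimes>\<^sub>M lebesgue)"
    using measurable_fst measurable_snd
    by (auto intro: measurable_compose[OF _ id_borel_measurable_lebesgue[unfolded id_def]])
  obtain M where M: "\<And>u. u \<in> {a..b} \<Longrightarrow> \<bar>g u\<bar> \<le> M"
    using compact_imp_bounded[OF compact_continuous_image[OF g compact_Icc]]
    unfolding bounded_iff by (auto simp del: atLeastAtMost_iff)
  have "integrable (lebesgue \<Otimes>\<^sub>M lebesgue) (\<lambda>(u, s). if s \<le> u then gb u * hb s else 0)"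
  proof (rule Bochner_Integration.integrable_bound)
    show "integrable (lebesgue \<Otimes>\<^sub>M lebesgue) (\<lambda>(u, s). M * indicator {a..b} u * \<bar>hb s\<bar>)"
      using hb_int by (intro lebesgue_pair.Fubini_integrable)
        (auto simp: abs_mult integrable_real_indicator emeasure_lborel_Icc_eq split: split_indicator)
    show "AE x in lebesgue \<Otimes>\<^sub>M lebesgue. norm (case x of (u, s) \<Rightarrow> if s \<le> u then gb u * hb s else 0)
        \<le> norm (case x of (u, s) \<Rightarrow> M * indicator {a..b} u * \<bar>hb s\<bar>)"
    proof (intro AE_I2, clarify)
      fix u s
      show "norm (if s \<le> u then gb u * hb s else 0) \<le> norm (M * indicator {a..b} u * \<bar>hb s\<bar>)"
        using M[of u] by (auto simp: gb_def abs_mult intro!: mult_right_mono split: split_indicator)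
    qed
  qed measurable
  then show ?thesis
    unfolding gb_def hb_def .
qed

lemma integral_mult_indefinite_integral_swap:
  fixes g h :: "real \<Rightarrow> real"
  assumes h: "h absolutely_integrable_on {a..b}" and g: "continuous_on {a..b} g"
  shows "integral {a..b} (\<lambda>u. g u * integral {a..u} h) = integral {a..b} (\<lambda>s. h s * integral {s..b} g)"
proof -
  define F where "F u s = (if s \<le> u then indicator {a..b} u * g u * (indicator {a..b} s * h s) else 0)"
    for u s
  have F_int: "integrable (lebesgue \<Otimes>\<^sub>M lebesgue) (\<lambda>(u, s). F u s)"
    unfolding F_def using h g by (rule integrable_triangle_kernel)
  have F_u: "(\<integral>s. F u s \<partial>lebesgue) = indicator {a..b} u * (g u * integral {a..u} h)" for u
  proof (cases "u \<in> {a..b}")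
    case True
    then have "h absolutely_integrable_on {a..u}"
      by (intro absolutely_integrable_on_subinterval[OF h]) auto
    moreover have "(\<lambda>s. F u s) = (\<lambda>s. g u * (indicator {a..u} s *\<^sub>R h s))"
      using True by (auto simp: F_def split: split_indicator)
    ultimately show ?thesis
      using True by (simp add: set_lebesgue_integral_eq_integral(2)[symmetric] set_lebesgue_integral_def)
  next
    case False
    then have "(\<lambda>s. F u s) = (\<lambda>s. 0)"
      by (auto simp: F_def)
    then show ?thesis
      using False by simp
  qed
  have F_s: "(\<integral>u. F u s \<partial>lebesgue) = indicator {a..b} s * (h s * integral {s..b} g)" for s
  proof (cases "s \<in> {a..b}")
    case True
    then have "g absolutely_integrable_on {s..b}"
      by (intro absolutely_integrable_continuous_real continuous_on_subset[OF g]) auto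
    moreover have "(\<lambda>u. F u s) = (\<lambda>u. h s * (indicator {s..b} u *\<^sub>R g u))"
      using True by (auto simp: F_def split: split_indicator)
    ultimately show ?thesis
      using True by (simp add: set_lebesgue_integral_eq_integral(2)[symmetric] set_lebesgue_integral_def)
  next
    case False
    then have "(\<lambda>u. F u s) = (\<lambda>u. 0)"
      by (auto simp: F_def)
    then show ?thesis
      using False by simp
  qed
  have "set_integrable lebesgue {a..b} (\<lambda>u. g u * integral {a..u} h)"
    using lebesgue_pair.integrable_fst[OF F_int] by (simp add: set_integrable_def F_u)
  moreover have "set_integrable lebesgue {a..b} (\<lambda>s. h s * integral {s..b} g)"
    using lebesgue_pair.integrable_snd[OF F_int] by (simp add: set_integrable_def F_s)
  moreover have "(\<integral>s. (\<integral>u. F u s \<partial>lebesgue) \<partial>lebesgue) = (\<integral>u. (\<integral>s. F u s \<partial>lebesgue) \<partial>lebesgue)"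
    by (rule lebesgue_pair.Fubini_integral[OF F_int])
  ultimately show ?thesis
    by (simp add: F_u F_s set_lebesgue_integral_eq_integral(2)[symmetric] set_lebesgue_integral_def)
qed

lemma absolutely_integrable_continuous_mult:
  fixes g h :: "real \<Rightarrow> real"
  assumes "continuous_on {a..b} g" and "h absolutely_integrable_on {a..b}"
  shows "(\<lambda>x. g x * h x) absolutely_integrable_on {a..b}"
proof (rule absolutely_integrable_bounded_measurable_product_real[OF _ _ _ assms(2)])
  show "g \<in> borel_measurable (lebesgue_on {a..b})"
    using assms(1) by (rule continuous_imp_measurable_on_sets_lebesgue) auto
  show "bounded (g ` {a..b})"
    using assms(1) by (intro compact_imp_bounded compact_continuous_image compact_Icc)
qed auto

lemma integral_by_parts_indefinite_integral:
  fixes G G' h :: "real \<Rightarrow> real"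
  assumes "a \<le> b" and h: "h absolutely_integrable_on {a..b}"
    and G'_cont: "continuous_on {a..b} G'"
    and G_deriv: "\<And>x. x \<in> {a..b} \<Longrightarrow> (G has_real_derivative G' x) (at x within {a..b})"
  shows "integral {a..b} (\<lambda>s. G s * h s)
    = G b * integral {a..b} h - integral {a..b} (\<lambda>u. G' u * integral {a..u} h)"
proof -
  have G_FTC: "integral {s..b} G' = G b - G s" if "s \<in> {a..b}" for s
  proof (rule integral_unique, rule fundamental_theorem_of_calculus)
    fix x
    assume "x \<in> {s..b}"
    with that G_deriv[of x] show "(G has_vector_derivative G' x) (at x within {s..b})"
      by (auto simp: has_real_derivative_iff_has_vector_derivative[symmetric]
          intro: has_field_derivative_subset)
  qed (use that in auto)
  have "continuous_on {a..b} (\<lambda>s. G b - G s)"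
    using G_deriv by (intro continuous_intros DERIV_continuous_on)
  then have "(\<lambda>s. (G b - G s) * h s) integrable_on {a..b}"
    using absolutely_integrable_continuous_mult[OF _ h] by (simp add: absolutely_integrable_on_def)
  then have "(\<lambda>s. h s * integral {s..b} G') integrable_on {a..b}"
    by (rule integrable_spike_finite[of "{}", rotated 2]) (auto simp: G_FTC mult.commute)
  moreover have "(\<lambda>s. G b * h s) integrable_on {a..b}"
    using h by (intro integrable_on_mult_right) (simp add: absolutely_integrable_on_def)
  ultimately have "integral {a..b} (\<lambda>s. G b * h s - h s * integral {s..b} G')
      = G b * integral {a..b} h - integral {a..b} (\<lambda>s. h s * integral {s..b} G')"
    by (simp add: integral_diff)
  moreover have "integral {a..b} (\<lambda>s. G s * h s) = integral {a..b} (\<lambda>s. G b * h s - h s * integral {s..b} G')"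
    by (rule integral_cong) (simp add: G_FTC algebra_simps)
  ultimately show ?thesis
    using integral_mult_indefinite_integral_swap[OF h G'_cont] by simp
qed

lemma abs_integral_mult_le_has_integral:
  fixes A a z :: "real \<Rightarrow> real"
  assumes A_int: "(a has_integral A t - A s) {s..t}"
    and az_int: "(\<lambda>x. a x * z x) integrable_on {s..t}"
    and "\<And>x. x \<in> {s..t} \<Longrightarrow> 0 \<le> a x"
    and "\<And>x. x \<in> {s..t} \<Longrightarrow> \<bar>z x\<bar> \<le> e"
  shows "\<bar>integral {s..t} (\<lambda>x. a x * z x)\<bar> \<le> e * (A t - A s)"
proof -
  have "norm (integral {s..t} (\<lambda>x. a x * z x)) \<le> integral {s..t} (\<lambda>x. a x * e)"
  proof (rule integral_norm_bound_integral[OF az_int])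
    show "(\<lambda>x. a x * e) integrable_on {s..t}"
      using A_int by (intro integrable_on_mult_left) blast
    show "norm (a x * z x) \<le> a x * e" if "x \<in> {s..t}" for x
      using assms(3,4)[OF that] by (simp add: abs_mult mult_left_mono)
  qed
  also have "\<dots> = e * (A t - A s)"
    using integral_unique[OF A_int] by simp
  finally show ?thesis
    by simp
qed

lemma indefinite_integral_null_smallo:
  fixes A a z :: "real \<Rightarrow> real"
  assumes A_int: "\<And>s t. 0 \<le> s \<Longrightarrow> s \<le> t \<Longrightarrow> (a has_integral A t - A s) {s..t}"
    and a_nonneg: "\<And>t. 0 \<le> t \<Longrightarrow> 0 \<le> a t"
    and A_top: "filterlim A at_top at_top"
    and az_int: "\<And>t. 0 \<le> t \<Longrightarrow> (\<lambda>s. a s * z s) integrable_on {0..t}"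
    and z_null: "(z \<longlongrightarrow> 0) at_top"
  shows "(\<lambda>t. integral {0..t} (\<lambda>s. a s * z s)) \<in> o[at_top](A)"
proof (rule landau_o.smallI)
  fix c :: real
  assume "c > 0"
  define e where "e = c / 2"
  define P where "P t = integral {0..t} (\<lambda>s. a s * z s)" for t
  obtain T where "T \<ge> 0" and T: "\<And>s. s \<ge> T \<Longrightarrow> \<bar>z s\<bar> \<le> e"
  proof -
    have "e > 0"
      using \<open>c > 0\<close> by (simp add: e_def)
    with z_null have "eventually (\<lambda>s. \<bar>z s\<bar> < e) at_top"
      by (auto simp: tendsto_iff dist_real_def)
    then obtain N where "\<And>s. s \<ge> N \<Longrightarrow> \<bar>z s\<bar> < e"
      by (auto simp: eventually_at_top_linorder)
    then show thesis
      by (intro that[of "max N 0"]) (auto simp: less_imp_le)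
  qed
  have "eventually (\<lambda>t. \<bar>P T\<bar> / e + \<bar>A T\<bar> \<le> A t \<and> T \<le> t) at_top"
    using A_top by (intro eventually_conj eventually_ge_at_top) (simp add: filterlim_at_top)
  then show "eventually (\<lambda>t. norm (P t) \<le> c * norm (A t)) at_top"
  proof eventually_elim
    case (elim t)
    then have "T \<le> t" by simp
    have "P t = P T + integral {T..t} (\<lambda>s. a s * z s)"
      unfolding P_def using \<open>T \<ge> 0\<close> \<open>T \<le> t\<close>
      by (simp add: Henstock_Kurzweil_Integration.integral_combine az_int)
    moreover have "\<bar>integral {T..t} (\<lambda>s. a s * z s)\<bar> \<le> e * (A t - A T)"
      using \<open>T \<ge> 0\<close> \<open>T \<le> t\<close> az_int[of t]
      by (intro abs_integral_mult_le_has_integral A_int a_nonneg T) (auto intro: integrable_on_subinterval)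
    ultimately have "\<bar>P t\<bar> \<le> \<bar>P T\<bar> + e * (A t - A T)"
      by linarith
    also have "\<dots> \<le> c * A t"
      using elim \<open>c > 0\<close> mult_left_mono[OF abs_ge_minus_self[of "A T"], of c]
      by (simp add: e_def field_simps)
    finally show ?case
      using \<open>c > 0\<close> by (simp add: order_trans[OF _ mult_left_mono[OF abs_ge_self]])
  qed
qed

lemma smallo_rotation_iff:
  fixes C S U V g :: "'a \<Rightarrow> real" and a b :: real
  assumes "a\<^sup>2 + b\<^sup>2 \<noteq> 0"
    and U: "(\<lambda>x. U x - (a * C x + b * S x)) \<in> o[F](g)"
    and V: "(\<lambda>x. V x - (a * S x - b * C x)) \<in> o[F](g)"
  shows "C \<in> o[F](g) \<and> S \<in> o[F](g) \<longleftrightarrow> U \<in> o[F](g) \<and> V \<in> o[F](g)"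
proof
  assume "C \<in> o[F](g) \<and> S \<in> o[F](g)"
  then have "(\<lambda>x. a * C x + b * S x) \<in> o[F](g)" "(\<lambda>x. a * S x - b * C x) \<in> o[F](g)"
    by (auto intro: sum_in_smallo)
  from sum_in_smallo(1)[OF U this(1)] sum_in_smallo(1)[OF V this(2)]
  show "U \<in> o[F](g) \<and> V \<in> o[F](g)"
    by simp
next
  assume "U \<in> o[F](g) \<and> V \<in> o[F](g)"
  then have "(\<lambda>x. a * U x - b * V x - a * (U x - (a * C x + b * S x)) + b * (V x - (a * S x - b * C x))) \<in> o[F](g)"
    "(\<lambda>x. b * U x + a * V x - b * (U x - (a * C x + b * S x)) - a * (V x - (a * S x - b * C x))) \<in> o[F](g)"
    using U V by (auto intro!: sum_in_smallo)
  then have "(\<lambda>x. (a\<^sup>2 + b\<^sup>2) * C x) \<in> o[F](g)" "(\<lambda>x. (a\<^sup>2 + b\<^sup>2) * S x) \<in> o[F](g)"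
    by (simp_all add: algebra_simps power2_eq_square)
  then show "C \<in> o[F](g) \<and> S \<in> o[F](g)"
    using assms(1) by auto
qed

lemma y1fun_eq: "y1fun \<omega> f t = exp (- (\<omega>\<^sup>2 * t)) * integral {0..t} (\<lambda>s. exp (\<omega>\<^sup>2 * s) * f s)"
proof -
  have "y1fun \<omega> f t = integral {0..t} (\<lambda>s. exp (- (\<omega>\<^sup>2 * t)) * (exp (\<omega>\<^sup>2 * s) * f s))"
    unfolding y1fun_def by (rule integral_cong) (simp add: exp_add[symmetric] algebra_simps)
  then show ?thesis
    by simp
qed

lemma continuous_on_y1fun:
  assumes "f absolutely_integrable_on {0..t}"
  shows "continuous_on {0..t} (y1fun \<omega> f)"
proof -
  have "(\<lambda>s. exp (\<omega>\<^sup>2 * s) * f s) integrable_on {0..t}"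
    using absolutely_integrable_continuous_mult[OF _ assms]
    by (simp add: absolutely_integrable_on_def continuous_intros)
  then show ?thesis
    unfolding y1fun_eq[abs_def] by (intro continuous_intros indefinite_integral_continuous_1)
qed

lemma integral_mult_eq_y1fun:
  fixes \<phi> \<phi>' f :: "real \<Rightarrow> real"
  assumes "0 \<le> t" and f: "f absolutely_integrable_on {0..t}"
    and \<phi>'_cont: "continuous_on {0..t} \<phi>'"
    and \<phi>_deriv: "\<And>s. s \<in> {0..t} \<Longrightarrow> (\<phi> has_real_derivative \<phi>' s) (at s within {0..t})"
  shows "integral {0..t} (\<lambda>s. \<phi> s * f s) = \<phi> t * y1fun \<omega> f t
    + \<omega>\<^sup>2 * integral {0..t} (\<lambda>s. \<phi> s * y1fun \<omega> f s) - integral {0..t} (\<lambda>s. \<phi>' s * y1fun \<omega> f s)"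
proof -
  define w where "w = \<omega>\<^sup>2"
  define h where "h s = exp (w * s) * f s" for s
  have h: "h absolutely_integrable_on {0..t}"
    unfolding h_def by (intro absolutely_integrable_continuous_mult f continuous_intros)
  have y: "y1fun \<omega> f s = exp (- (w * s)) * integral {0..s} h" for s
    by (simp add: y1fun_eq w_def h_def[abs_def])
  have \<phi>_cont: "continuous_on {0..t} \<phi>"
    using \<phi>_deriv by (rule DERIV_continuous_on)
  have y_cont: "continuous_on {0..t} (y1fun \<omega> f)"
    using f by (rule continuous_on_y1fun)
  have "integral {0..t} (\<lambda>s. \<phi> s * f s) = integral {0..t} (\<lambda>s. (\<phi> s * exp (- (w * s))) * h s)"
    by (rule integral_cong) (simp add: h_def exp_minus field_simps)
  also have "\<dots> = \<phi> t * exp (- (w * t)) * integral {0..t} h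
        - integral {0..t} (\<lambda>u. ((\<phi>' u - w * \<phi> u) * exp (- (w * u))) * integral {0..u} h)"
    using \<open>0 \<le> t\<close> h
    by (rule integral_by_parts_indefinite_integral)
      (auto intro!: derivative_eq_intros continuous_intros \<phi>_deriv \<phi>_cont \<phi>'_cont simp: algebra_simps)
  also have "\<dots> = \<phi> t * y1fun \<omega> f t - integral {0..t} (\<lambda>u. \<phi>' u * y1fun \<omega> f u - w * (\<phi> u * y1fun \<omega> f u))"
    by (simp add: y algebra_simps)
  also have "\<dots> = \<phi> t * y1fun \<omega> f t + w * integral {0..t} (\<lambda>s. \<phi> s * y1fun \<omega> f s)
      - integral {0..t} (\<lambda>s. \<phi>' s * y1fun \<omega> f s)"
    by (subst integral_diff) (auto intro!: integrable_continuous_interval continuous_intros \<phi>_cont \<phi>'_cont y_cont)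
  finally show ?thesis
    by (simp add: w_def)
qed

lemma Afun_pos: "0 < Afun p t"
  by (simp add: Afun_def)

lemma has_real_derivative_Afun:
  assumes "continuous_on {0..} p" and "0 \<le> a" and "x \<in> {a..b}"
  shows "(Afun p has_real_derivative p x / 2 * Afun p x) (at x within {a..b})"
proof -
  have "((\<lambda>u. integral {0..u} p) has_real_derivative p x) (at x within {0..b})"
    using assms
    by (auto simp: has_real_derivative_iff_has_vector_derivative
        intro!: integral_has_vector_derivative continuous_on_subset[OF assms(1)])
  then have "((\<lambda>u. integral {0..u} p) has_real_derivative p x) (at x within {a..b})"
    by (rule has_field_derivative_subset) (use assms in auto)
  then show ?thesis
    unfolding Afun_def by (auto intro!: derivative_eq_intros)
qed

lemma Afun_at_top:
  assumes "filterlim (\<lambda>t. integral {0..t} p) at_top at_top"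
  shows "filterlim (Afun p) at_top at_top"
proof -
  have "filterlim (\<lambda>t. integral {0..t} p * (1 / 2)) at_top at_top"
    by (rule filterlim_at_top_mult_tendsto_pos[OF tendsto_const _ assms]) simp
  then have "filterlim (\<lambda>t. integral {0..t} p / 2) at_top at_top"
    by simp
  then show ?thesis
    unfolding Afun_def[abs_def] by (rule filterlim_compose[OF exp_at_top])
qed

lemma continuous_on_Afun:
  assumes "continuous_on {0..} p"
  shows "continuous_on {0..t} (Afun p)"
  using has_real_derivative_Afun[OF assms order_refl] by (rule DERIV_continuous_on)

lemma Afun_has_integral:
  assumes "continuous_on {0..} p" and "0 \<le> s" and "s \<le> t"
  shows "((\<lambda>x. p x / 2 * Afun p x) has_integral Afun p t - Afun p s) {s..t}"
proof (rule fundamental_theorem_of_calculus)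
  fix x
  assume "x \<in> {s..t}"
  with assms show "(Afun p has_vector_derivative p x / 2 * Afun p x) (at x within {s..t})"
    unfolding has_real_derivative_iff_has_vector_derivative[symmetric]
    by (intro has_real_derivative_Afun) auto
qed (use assms in simp)

lemma integral_weighted_Afun_f_eq:
  fixes \<omega> :: real and p c c' f :: "real \<Rightarrow> real"
  assumes p_cont: "continuous_on {0..} p"
    and "0 \<le> t" and f: "f absolutely_integrable_on {0..t}"
    and c_deriv: "\<And>s. (c has_real_derivative c' s) (at s)"
    and c'_cont: "continuous_on UNIV c'"
  shows "integral {0..t} (\<lambda>s. c s * Afun p s * f s)
      - \<omega>\<^sup>2 * integral {0..t} (\<lambda>s. c s * Afun p s * y1fun \<omega> f s)
      + integral {0..t} (\<lambda>s. c' s * Afun p s * y1fun \<omega> f s)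
    = c t * Afun p t * y1fun \<omega> f t - integral {0..t} (\<lambda>s. p s / 2 * Afun p s * (c s * y1fun \<omega> f s))"
proof -
  let ?A = "Afun p" and ?y = "y1fun \<omega> f"
  have c_cont: "continuous_on S c" for S
    using c_deriv by (intro continuous_at_imp_continuous_on) (auto intro: DERIV_isCont)
  note conts = continuous_on_Afun[OF p_cont] c_cont c'_cont[THEN continuous_on_subset]
    continuous_on_y1fun[OF f] continuous_on_subset[OF p_cont]
  have "integral {0..t} (\<lambda>s. (c' s * ?A s + c s * (p s / 2 * ?A s)) * ?y s)
      = integral {0..t} (\<lambda>s. c' s * ?A s * ?y s) + integral {0..t} (\<lambda>s. p s / 2 * ?A s * (c s * ?y s))"
    by (subst integral_add[symmetric])
      (auto simp: algebra_simps intro!: integrable_continuous_interval continuous_intros conts)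
  moreover have "integral {0..t} (\<lambda>s. c s * ?A s * f s) = c t * ?A t * ?y t
      + \<omega>\<^sup>2 * integral {0..t} (\<lambda>s. c s * ?A s * ?y s)
      - integral {0..t} (\<lambda>s. (c' s * ?A s + c s * (p s / 2 * ?A s)) * ?y s)"
    using \<open>0 \<le> t\<close> f
    by (rule integral_mult_eq_y1fun)
      (auto intro!: continuous_intros conts derivative_eq_intros has_real_derivative_Afun[OF p_cont order_refl]
        has_field_derivative_at_within[OF c_deriv])
  ultimately show ?thesis
    by simp
qed

lemma Afun_weighted_integral_f_y1fun_smallo:
  fixes \<omega> :: real and p c c' f :: "real \<Rightarrow> real"
  assumes p_cont: "continuous_on {0..} p"
    and p_nonneg: "\<And>t. 0 \<le> t \<Longrightarrow> 0 \<le> p t"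
    and p_int_top: "filterlim (\<lambda>t. integral {0..t} p) at_top at_top"
    and f_loc: "\<And>t. 0 \<le> t \<Longrightarrow> f absolutely_integrable_on {0..t}"
    and y1_null: "(y1fun \<omega> f \<longlongrightarrow> 0) at_top"
    and c_deriv: "\<And>s. (c has_real_derivative c' s) (at s)"
    and c'_cont: "continuous_on UNIV c'"
    and c_bounded: "\<And>s. \<bar>c s\<bar> \<le> 1"
  shows "(\<lambda>t. integral {0..t} (\<lambda>s. c s * Afun p s * f s)
      - \<omega>\<^sup>2 * integral {0..t} (\<lambda>s. c s * Afun p s * y1fun \<omega> f s)
      + integral {0..t} (\<lambda>s. c' s * Afun p s * y1fun \<omega> f s)) \<in> o[at_top](Afun p)"
proof -
  let ?A = "Afun p" and ?y = "y1fun \<omega> f"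
  have cy_null: "((\<lambda>s. c s * ?y s) \<longlongrightarrow> 0) at_top"
  proof (rule Lim_null_comparison[OF _ tendsto_rabs_zero[OF y1_null]])
    show "\<forall>\<^sub>F s in at_top. norm (c s * ?y s) \<le> \<bar>?y s\<bar>"
      using c_bounded by (intro always_eventually allI) (simp add: abs_mult mult_left_le_one_le)
  qed
  have boundary: "(\<lambda>t. c t * ?A t * ?y t) \<in> o[at_top](?A)"
  proof (rule smalloI_tendsto)
    show "((\<lambda>t. c t * ?A t * ?y t / ?A t) \<longlongrightarrow> 0) at_top"
      using cy_null by (simp add: Afun_pos less_imp_neq[OF Afun_pos, symmetric])
  qed (simp add: less_imp_neq[OF Afun_pos, symmetric])
  have remainder: "(\<lambda>t. integral {0..t} (\<lambda>s. p s / 2 * ?A s * (c s * ?y s))) \<in> o[at_top](?A)"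
  proof (rule indefinite_integral_null_smallo[OF Afun_has_integral[OF p_cont] _ Afun_at_top[OF p_int_top] _ cy_null])
    show "0 \<le> p t / 2 * ?A t" if "0 \<le> t" for t
      using p_nonneg[OF that] Afun_pos[of p t] by simp
    have c_cont: "continuous_on S c" for S
      using c_deriv by (intro continuous_at_imp_continuous_on) (auto intro: DERIV_isCont)
    show "(\<lambda>s. p s / 2 * ?A s * (c s * ?y s)) integrable_on {0..t}" if "0 \<le> t" for t
      using that by (auto intro!: integrable_continuous_interval continuous_intros continuous_on_Afun p_cont
          c_cont continuous_on_y1fun f_loc continuous_on_subset[OF p_cont])
  qed
  have R_eq: "eventually (\<lambda>t. integral {0..t} (\<lambda>s. c s * ?A s * f s)
      - \<omega>\<^sup>2 * integral {0..t} (\<lambda>s. c s * ?A s * ?y s) + integral {0..t} (\<lambda>s. c' s * ?A s * ?y s)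
    = c t * ?A t * ?y t - integral {0..t} (\<lambda>s. p s / 2 * ?A s * (c s * ?y s))) at_top"
    using eventually_ge_at_top[of 0]
    by eventually_elim (rule integral_weighted_Afun_f_eq[OF p_cont _ f_loc c_deriv c'_cont])
  show ?thesis
    unfolding landau_o.small.in_cong[OF R_eq] by (rule sum_in_smallo(2)[OF boundary remainder])
qed

theorem mainTheorem13:
  fixes \<omega> :: real and p p' f :: "real \<Rightarrow> real"
  assumes omega_pos: "\<omega> > 0"
    and p_deriv: "\<And>t. t \<ge> 0 \<Longrightarrow> (p has_real_derivative p' t) (at t within {0..})"
    and p'_cont: "continuous_on {0..} p'"
    and p_pos: "\<And>t. t \<ge> 0 \<Longrightarrow> p t > 0"
    and p'_neg: "\<And>t. t \<ge> 0 \<Longrightarrow> p' t < 0"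
    and p_int_infinite: "filterlim (\<lambda>t. integral {0..t} p) at_top at_top"
    and p_sq_int: "(\<lambda>t. (p t)\<^sup>2) integrable_on {0..}"
    and f_loc: "\<And>t. t \<ge> 0 \<Longrightarrow> f absolutely_integrable_on {0..t}"
    and y1_lim: "((y1fun \<omega> f) \<longlongrightarrow> 0) at_top"
  shows "((\<lambda>t. integral {0..t} (\<lambda>s. cos (\<omega> * s) * Afun p s * y1fun \<omega> f s)) \<in> o[at_top](Afun p) \<and>
          (\<lambda>t. integral {0..t} (\<lambda>s. sin (\<omega> * s) * Afun p s * y1fun \<omega> f s)) \<in> o[at_top](Afun p))
     \<longleftrightarrow>
         ((\<lambda>t. integral {0..t} (\<lambda>s. cos (\<omega> * s) * Afun p s * f s)) \<in> o[at_top](Afun p) \<and>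
          (\<lambda>t. integral {0..t} (\<lambda>s. sin (\<omega> * s) * Afun p s * f s)) \<in> o[at_top](Afun p))"
proof (rule smallo_rotation_iff)
  have p_cont: "continuous_on {0..} p"
    using p_deriv by (intro DERIV_continuous_on) auto
  have p_nonneg: "0 \<le> p t" if "0 \<le> t" for t
    using p_pos[OF that] by simp
  have "0 < (\<omega>\<^sup>2)\<^sup>2 + \<omega>\<^sup>2"
    using omega_pos by (intro add_pos_pos) auto
  then show "(\<omega>\<^sup>2)\<^sup>2 + \<omega>\<^sup>2 \<noteq> 0"
    by simp
  have "(\<lambda>t. integral {0..t} (\<lambda>s. cos (\<omega> * s) * Afun p s * f s)
      - \<omega>\<^sup>2 * integral {0..t} (\<lambda>s. cos (\<omega> * s) * Afun p s * y1fun \<omega> f s)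
      + integral {0..t} (\<lambda>s. - \<omega> * sin (\<omega> * s) * Afun p s * y1fun \<omega> f s)) \<in> o[at_top](Afun p)"
    by (rule Afun_weighted_integral_f_y1fun_smallo[OF p_cont p_nonneg p_int_infinite f_loc y1_lim])
      (auto intro!: derivative_eq_intros continuous_intros)
  then show "(\<lambda>t. integral {0..t} (\<lambda>s. cos (\<omega> * s) * Afun p s * f s)
      - (\<omega>\<^sup>2 * integral {0..t} (\<lambda>s. cos (\<omega> * s) * Afun p s * y1fun \<omega> f s)
        + \<omega> * integral {0..t} (\<lambda>s. sin (\<omega> * s) * Afun p s * y1fun \<omega> f s))) \<in> o[at_top](Afun p)"
    by (simp add: mult.assoc algebra_simps)
  have "(\<lambda>t. integral {0..t} (\<lambda>s. sin (\<omega> * s) * Afun p s * f s)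
      - \<omega>\<^sup>2 * integral {0..t} (\<lambda>s. sin (\<omega> * s) * Afun p s * y1fun \<omega> f s)
      + integral {0..t} (\<lambda>s. \<omega> * cos (\<omega> * s) * Afun p s * y1fun \<omega> f s)) \<in> o[at_top](Afun p)"
    by (rule Afun_weighted_integral_f_y1fun_smallo[OF p_cont p_nonneg p_int_infinite f_loc y1_lim])
      (auto intro!: derivative_eq_intros continuous_intros)
  then show "(\<lambda>t. integral {0..t} (\<lambda>s. sin (\<omega> * s) * Afun p s * f s)
      - (\<omega>\<^sup>2 * integral {0..t} (\<lambda>s. sin (\<omega> * s) * Afun p s * y1fun \<omega> f s)
        - \<omega> * integral {0..t} (\<lambda>s. cos (\<omega> * s) * Afun p s * y1fun \<omega> f s))) \<in> o[at_top](Afun p)"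
    by (simp add: mult.assoc algebra_simps)
qed

end
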